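(* Let $\psi_1,\dots,\psi_L\in\mathbb R^n$ and define $\beta_\ell=n^{-1}\sum_{i=1}^n\nabla f(X_i)\psi_{\ell,i}$ for $\ell=1,\dots,L$. If $\operatorname{span}\{\psi_1,\dots,\psi_L\}=\mathbb R^n$, then there exist vectors $\bar\beta_1,\dots,\bar\beta_{m^*}\in\mathcal B^*=\{\sum_{\ell=1}^Lc_\ell\beta_\ell:\sum_{\ell}|c_\ell|\le1\}$ and constants $\mu_1,\dots,\mu_{m^*}$ (possibly depending on $n$) such that $\Pi^*\preceq\sum_{k=1}^{m^*}\mu_k\bar\beta_k\bar\beta_k^\top$.
   Context: Let $X_1,\dots,X_n\in\mathbb R^d$ and $f(x)=g(\vartheta_1^\top x,\dots,\vartheta_{m^*}^\top x)$ with $g:\mathbb R^{m^*}\to\mathbb R$ differentiable and $\vartheta_1,\dots,\vartheta_{m^*}$ orthonormal in $\mathbb R^d$. The subspace $\mathcal S=\operatorname{span}\{\nabla f(X_1),\dots,\nabla f(X_n)\}$ is assumed to have dimension $m^*$ (i.e. it coincides with the EDR subspace spanned by $\vartheta_1,\dots,\vartheta_{m^*}$), and $\Pi^*$ denotes the orthogonal projector onto $\mathcal S$. $\psi_{\ell,i}$ is the $i$th coordinate of $\psi_\ell$. $A\preceq B$ means $B-A$ is positive semidefinite. *)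

theory Defs
  imports "HOL-Analysis.Analysis"
begin

definition grad :: "('a::real_inner \<Rightarrow> real) \<Rightarrow> 'a \<Rightarrow> 'a" where
  "grad f x = (THE D. GDERIV f x :> D)"

definition is_orth_proj :: "real^'d^'d \<Rightarrow> (real^'d) set \<Rightarrow> bool" where
  "is_orth_proj P S \<longleftrightarrow> (\<forall>x. P *v x \<in> S \<and> (\<forall>y\<in>S. (x - P *v x) \<bullet> y = 0))"

definition outer :: "real^'d \<Rightarrow> real^'d \<Rightarrow> real^'d^'d" where
  "outer u v = (\<chi> i j. u $ i * v $ j)"

definition loewner_le :: "real^'d^'d \<Rightarrow> real^'d^'d \<Rightarrow> bool" where
  "loewner_le A B \<longleftrightarrow> (\<forall>x. 0 \<le> x \<bullet> ((B - A) *v x))"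

end

theory Submission imports Defs begin

(* The map v |-> n^-1 sum_i v_i grad f(X_i) is linear with range S, so it sends the spanning
   family psi_1, ..., psi_L to a family beta_1, ..., beta_L spanning S. Choose a basis of S
   among the beta_l; each basis vector lies in B* (take c the indicator of its index).
   A basis b_1, ..., b_m of S is a frame: y |-> (b_k . y)_k is injective on S, hence bounded
   below there by some e > 0, which gives Pi* <= e^-2 sum_k b_k b_k^T. *)

lemma matrix_vector_mult_sum_left:
  "finite A \<Longrightarrow> (\<Sum>k\<in>A. M k) *v (x::real^'d) = (\<Sum>k\<in>A. M k *v x)"
  by (induction A rule: finite_induct) (auto simp: matrix_vector_mult_add_rdistrib)

lemma outer_mult_vec: "outer u v *v x = (v \<bullet> x) *\<^sub>R u"
  by (simp add: vec_eq_iff outer_def matrix_vector_mult_def inner_vec_def sum_distrib_left mult_ac)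

lemma quadratic_form_sum_outer:
  fixes b :: "'k::finite \<Rightarrow> real^'d"
  shows "x \<bullet> ((\<Sum>k\<in>UNIV. \<mu> k *\<^sub>R outer (b k) (b k)) *v x) = (\<Sum>k\<in>UNIV. \<mu> k * (b k \<bullet> x)\<^sup>2)"
  by (simp add: matrix_vector_mult_sum_left scaleR_matrix_vector_assoc[symmetric] outer_mult_vec
      inner_sum_right power2_eq_square inner_commute mult.assoc)

lemma orth_proj_inner_eq_norm_square:
  assumes "is_orth_proj P S"
  shows "x \<bullet> (P *v x) = (norm (P *v x))\<^sup>2"
proof -
  have "(x - P *v x) \<bullet> (P *v x) = 0"
    using assms unfolding is_orth_proj_def by blast
  then show ?thesis
    by (simp add: inner_diff_left power2_norm_eq_inner)
qed

lemma orth_proj_inner_eq: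
  assumes "is_orth_proj P S" "z \<in> S"
  shows "z \<bullet> (P *v x) = z \<bullet> x"
proof -
  have "(x - P *v x) \<bullet> z = 0"
    using assms unfolding is_orth_proj_def by blast
  then have "x \<bullet> z = (P *v x) \<bullet> z"
    by (simp add: inner_diff_left)
  then show ?thesis
    by (simp add: inner_commute)
qed

lemma linear_scaled_linear_combination:
  fixes w :: "'n::finite \<Rightarrow> 'a::real_vector"
  shows "linear (\<lambda>v::real^'n. a *\<^sub>R (\<Sum>i\<in>UNIV. (v $ i) *\<^sub>R w i))"
  by (intro linearI) (simp_all add: scaleR_add_left scaleR_add_right sum.distrib scaleR_sum_right mult_ac)

lemma range_scaled_linear_combination:
  fixes w :: "'n::finite \<Rightarrow> 'a::real_vector"
  assumes "a \<noteq> 0"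
  shows "range (\<lambda>v::real^'n. a *\<^sub>R (\<Sum>i\<in>UNIV. (v $ i) *\<^sub>R w i)) = span (range w)"
    (is "range ?G = _")
proof
  show "range ?G \<subseteq> span (range w)"
    by (intro image_subsetI span_scale span_sum) (simp add: span_base)
  have w_eq: "w j = ?G (axis j (1 / a))" for j
  proof -
    have "(\<Sum>i\<in>UNIV. (axis j (1 / a) $ i) *\<^sub>R w i) = (\<Sum>i\<in>UNIV. if i = j then (1 / a) *\<^sub>R w i else 0)"
      by (intro sum.cong) (simp_all add: axis_def)
    then show ?thesis
      using assms by simp
  qed
  have "range w \<subseteq> range ?G"
    by (rule image_subsetI, rule range_eqI, rule w_eq)
  then show "span (range w) \<subseteq> range ?G"
    by (intro span_minimal linear_subspace_image linear_scaled_linear_combination subspace_UNIV)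
qed

lemma obtain_basis_enumeration:
  fixes A :: "'a::euclidean_space set"
  assumes "dim A = CARD('m)"
  obtains b :: "'m::finite \<Rightarrow> 'a" where "range b \<subseteq> A" "span (range b) = span A"
proof -
  obtain B where B: "B \<subseteq> A" "independent B" "A \<subseteq> span B"
    using maximal_independent_subset by blast
  have span_B: "span B = span A"
    using B by (metis span_minimal span_mono subspace_span subset_antisym)
  have "card B = CARD('m)"
    using assms dim_span_eq_card_independent[OF B(2)] span_B by simp
  then obtain b where "bij_betw b (UNIV :: 'm set) B"
    using finite_same_card_bij[of "UNIV :: 'm set" B] independent_imp_finite[OF B(2)] by auto
  then have "range b = B"
    by (simp add: bij_betw_def)
  then show thesis
    using that B(1) span_B by blast
qed

lemma frame_lower_bound:
  fixes b :: "'k::finite \<Rightarrow> 'a::euclidean_space"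
  obtains C where "\<And>y. y \<in> span (range b) \<Longrightarrow> (norm y)\<^sup>2 \<le> C * (\<Sum>k\<in>UNIV. (b k \<bullet> y)\<^sup>2)"
proof -
  define T where "T y = (\<chi> k. b k \<bullet> y)" for y
  have "bounded_linear T"
    unfolding T_def linear_conv_bounded_linear[symmetric]
    by (intro linearI) (simp_all add: vec_eq_iff inner_add_right)
  moreover have "\<forall>y\<in>span (range b). T y = 0 \<longrightarrow> y = 0"
  proof (intro ballI impI)
    fix y assume y: "y \<in> span (range b)" "T y = 0"
    have "orthogonal y y"
    proof (rule orthogonal_to_span[OF y(1)])
      fix x assume "x \<in> range b"
      then show "orthogonal y x"
        using y(2) by (auto simp: T_def vec_eq_iff orthogonal_def inner_commute)
    qed
    then show "y = 0"
      by (simp add: orthogonal_def)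
  qed
  ultimately obtain e where e: "e > 0" "\<forall>y\<in>span (range b). e * norm y \<le> norm (T y)"
    using injective_imp_isometric[OF closed_span subspace_span] by blast
  have "(norm y)\<^sup>2 \<le> (1 / e\<^sup>2) * (\<Sum>k\<in>UNIV. (b k \<bullet> y)\<^sup>2)" if "y \<in> span (range b)" for y
  proof -
    have "(e * norm y)\<^sup>2 \<le> (norm (T y))\<^sup>2"
      using e that by (intro power_mono) simp_all
    also have "\<dots> = (\<Sum>k\<in>UNIV. (b k \<bullet> y)\<^sup>2)"
      by (simp add: T_def norm_vec_def L2_set_def sum_nonneg)
    finally show ?thesis
      using e(1) by (simp add: field_simps power_mult_distrib)
  qed
  then show thesis
    using that by blast
qed

lemma orth_proj_loewner_le_frame_operator:
  fixes b :: "'k::finite \<Rightarrow> real^'d"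
  assumes "is_orth_proj P (span (range b))"
  obtains \<mu> :: "'k \<Rightarrow> real" where "loewner_le P (\<Sum>k\<in>UNIV. \<mu> k *\<^sub>R outer (b k) (b k))"
proof -
  obtain C where C: "\<And>y. y \<in> span (range b) \<Longrightarrow> (norm y)\<^sup>2 \<le> C * (\<Sum>k\<in>UNIV. (b k \<bullet> y)\<^sup>2)"
    using frame_lower_bound by blast
  have "x \<bullet> (P *v x) \<le> x \<bullet> ((\<Sum>k\<in>UNIV. C *\<^sub>R outer (b k) (b k)) *v x)" for x
  proof -
    have "P *v x \<in> span (range b)"
      using assms unfolding is_orth_proj_def by blast
    then have "(norm (P *v x))\<^sup>2 \<le> C * (\<Sum>k\<in>UNIV. (b k \<bullet> (P *v x))\<^sup>2)"
      by (rule C)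
    also have "\<dots> = (\<Sum>k\<in>UNIV. C * (b k \<bullet> x)\<^sup>2)"
      using orth_proj_inner_eq[OF assms] by (simp add: sum_distrib_left span_base)
    finally show ?thesis
      by (simp add: quadratic_form_sum_outer orth_proj_inner_eq_norm_square[OF assms])
  qed
  then have "loewner_le P (\<Sum>k\<in>UNIV. C *\<^sub>R outer (b k) (b k))"
    by (simp add: loewner_le_def matrix_vector_mult_diff_rdistrib inner_diff_right)
  then show thesis
    by (rule that)
qed

lemma mem_absolutely_convex_combinations:
  fixes v :: "nat \<Rightarrow> 'a::real_vector"
  assumes "l < L"
  shows "v l \<in> {\<Sum>j<L. c j *\<^sub>R v j | c. (\<Sum>j<L. \<bar>c j\<bar>) \<le> 1}"
proof -
  define c where "c j = (if j = l then 1 else 0 :: real)" for j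
  have "(\<Sum>j<L. \<bar>c j\<bar>) = 1"
    using assms by (simp add: c_def if_distrib cong: if_cong)
  moreover have "(\<Sum>j<L. c j *\<^sub>R v j) = (\<Sum>j<L. if j = l then v j else 0)"
    by (intro sum.cong) (simp_all add: c_def)
  ultimately have "(\<Sum>j<L. \<bar>c j\<bar>) \<le> 1" "v l = (\<Sum>j<L. c j *\<^sub>R v j)"
    using assms by simp_all
  then show ?thesis
    by force
qed

theorem lemma1:
  fixes X :: "'n::finite \<Rightarrow> real^'d"
    and g :: "real^'m::finite \<Rightarrow> real"
    and \<theta> :: "'m \<Rightarrow> real^'d"
    and f :: "real^'d \<Rightarrow> real"
    and P :: "real^'d^'d"
    and \<psi> :: "nat \<Rightarrow> real^'n"
    and L :: nat
  assumes g_diff: "\<And>y. g differentiable (at y)"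
    and orthonormal: "\<And>k k'. \<theta> k \<bullet> \<theta> k' = (if k = k' then 1 else 0)"
    and f_def: "\<And>x. f x = g (\<chi> k. \<theta> k \<bullet> x)"
    and dimS: "dim (span (range (\<lambda>i. grad f (X i)))) = CARD('m)"
    and proj: "is_orth_proj P (span (range (\<lambda>i. grad f (X i))))"
    and span_psi: "span (\<psi> ` {..<L}) = UNIV"
  shows "\<exists>\<beta>bar :: 'm \<Rightarrow> real^'d. \<exists>\<mu> :: 'm \<Rightarrow> real.
           (\<forall>k. \<beta>bar k \<in> {\<Sum>l<L. c l *\<^sub>R
                   ((1 / real CARD('n)) *\<^sub>R (\<Sum>i\<in>UNIV. (\<psi> l $ i) *\<^sub>R grad f (X i)))
                 | c. (\<Sum>l<L. \<bar>c l\<bar>) \<le> 1})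
         \<and> loewner_le P (\<Sum>k\<in>UNIV. \<mu> k *\<^sub>R outer (\<beta>bar k) (\<beta>bar k))"
proof -
  define G where "G v = (1 / real CARD('n)) *\<^sub>R (\<Sum>i\<in>UNIV. (v $ i) *\<^sub>R grad f (X i))" for v
  define \<beta> where "\<beta> l = G (\<psi> l)" for l
  have "span (\<beta> ` {..<L}) = span (G ` \<psi> ` {..<L})"
    by (simp add: \<beta>_def image_image)
  also have "\<dots> = G ` span (\<psi> ` {..<L})"
    unfolding G_def by (intro span_linear_image linear_scaled_linear_combination)
  also have "\<dots> = range G"
    by (simp add: span_psi)
  also have "\<dots> = span (range (\<lambda>i. grad f (X i)))"
    unfolding G_def by (simp add: range_scaled_linear_combination)
  finally have span_\<beta>: "span (\<beta> ` {..<L}) = span (range (\<lambda>i. grad f (X i)))" .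
  then have "dim (\<beta> ` {..<L}) = CARD('m)"
    using dimS by (simp flip: span_\<beta>)
  then obtain b :: "'m \<Rightarrow> real^'d"
    where b: "range b \<subseteq> \<beta> ` {..<L}" and span_b: "span (range b) = span (\<beta> ` {..<L})"
    by (rule obtain_basis_enumeration)
  have "is_orth_proj P (span (range b))"
    using proj by (simp only: span_b span_\<beta>)
  then obtain \<mu> where loewner: "loewner_le P (\<Sum>k\<in>UNIV. \<mu> k *\<^sub>R outer (b k) (b k))"
    by (rule orth_proj_loewner_le_frame_operator)
  have mem: "b k \<in> {\<Sum>l<L. c l *\<^sub>R \<beta> l | c. (\<Sum>l<L. \<bar>c l\<bar>) \<le> 1}" for k
  proof -
    obtain l where "l < L" "b k = \<beta> l"
      using b by blast
    then show ?thesis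
      using mem_absolutely_convex_combinations[of l L \<beta>] by simp
  qed
  show ?thesis
    using mem[unfolded \<beta>_def G_def] loewner by (intro exI[of _ b] exI[of _ \<mu>] conjI allI)
qed

end
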